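(* Let $F$ be a Finsler function on a two-dimensional manifold $M$, written on the region $y^1\neq0$ as $F=|y^1|f(x,u)$ with $u=y^2/y^1$, and let $\sigma$ be a smooth function on $M$. Put $Q=\frac{f'}{f-uf'}$ and let $\overline F=e^{\sigma(x)}F=|y^1|\overline f(x,u)$ with $\overline f=e^{\sigma}f$, $\overline Q=\frac{\overline f'}{\overline f-u\overline f'}$. Then $$\overline f_1'''+\overline Q\,\overline f_2'''=f_1'''+Qf_2'''+\frac{2\sigma_1QQ'Q'''-3\sigma_1Q''^2Q-2\sigma_2Q'Q'''+3\sigma_2Q''^2}{2Q'^2},$$ where $\overline f_1,\overline f_2$ are the functions $f_1,f_2$ computed from $\overline f$ in place of $f$.
   Context: Coordinates $(x^1,x^2)$ on $M$, $(x^i,y^i)$ on $TM$; $\partial_i=\partial/\partial x^i$; primes denote derivatives with respect to $u$; $\sigma_i=\partial\sigma/\partial x^i$. The functions $f_1,f_2$ are defined by $f_1=\frac{(\partial_1f+u\partial_2f)f''-(\partial_1f'+u\partial_2f'-\partial_2f)f'}{2ff''}$ and $f_2=\frac{u(\partial_1f+u\partial_2f)f''+(\partial_1f'+u\partial_2f'-\partial_2f)(f-uf')}{2ff''}$; they satisfy $G^1=f_1(y^1)^2$, $G^2=f_2(y^1)^2$ for the geodesic spray coefficients $G^i$ of $F$. For a Finsler surface one has $f''\neq0$ and $Q'=\frac{ff''}{(f-uf')^2}\neq0$. *)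

theory Defs
  imports "HOL-Analysis.Analysis"
begin

text \<open>Points of the coordinate domain are triples (x1, x2, u) with u = y2/y1.
  Partial derivatives with respect to x1, x2 and u.\<close>

definition D1 :: "(real \<times> real \<times> real \<Rightarrow> real) \<Rightarrow> real \<times> real \<times> real \<Rightarrow> real" where
  "D1 g = (\<lambda>(a, b, c). deriv (\<lambda>t. g (t, b, c)) a)"

definition D2 :: "(real \<times> real \<times> real \<Rightarrow> real) \<Rightarrow> real \<times> real \<times> real \<Rightarrow> real" where
  "D2 g = (\<lambda>(a, b, c). deriv (\<lambda>t. g (a, t, c)) b)"

definition Du :: "(real \<times> real \<times> real \<Rightarrow> real) \<Rightarrow> real \<times> real \<times> real \<Rightarrow> real" where
  "Du g = (\<lambda>(a, b, c). deriv (\<lambda>t. g (a, b, t)) c)"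

coinductive smooth3 :: "(real \<times> real \<times> real) set \<Rightarrow> (real \<times> real \<times> real \<Rightarrow> real) \<Rightarrow> bool"
  for U where
  "\<lbrakk> continuous_on U g;
     \<forall>a b c. (a, b, c) \<in> U \<longrightarrow>
        (\<lambda>t. g (t, b, c)) differentiable (at a) \<and>
        (\<lambda>t. g (a, t, c)) differentiable (at b) \<and>
        (\<lambda>t. g (a, b, t)) differentiable (at c);
     smooth3 U (D1 g); smooth3 U (D2 g); smooth3 U (Du g) \<rbrakk> \<Longrightarrow> smooth3 U g"

definition ucoord :: "real \<times> real \<times> real \<Rightarrow> real" where
  "ucoord p = snd (snd p)"

definition f1 :: "(real \<times> real \<times> real \<Rightarrow> real) \<Rightarrow> real \<times> real \<times> real \<Rightarrow> real" where
  "f1 f = (\<lambda>p. let u = ucoord p in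
     ((D1 f p + u * D2 f p) * Du (Du f) p
      - (D1 (Du f) p + u * D2 (Du f) p - D2 f p) * Du f p)
     / (2 * f p * Du (Du f) p))"

definition f2 :: "(real \<times> real \<times> real \<Rightarrow> real) \<Rightarrow> real \<times> real \<times> real \<Rightarrow> real" where
  "f2 f = (\<lambda>p. let u = ucoord p in
     (u * (D1 f p + u * D2 f p) * Du (Du f) p
      + (D1 (Du f) p + u * D2 (Du f) p - D2 f p) * (f p - u * Du f p))
     / (2 * f p * Du (Du f) p))"

definition Qf :: "(real \<times> real \<times> real \<Rightarrow> real) \<Rightarrow> real \<times> real \<times> real \<Rightarrow> real" where
  "Qf f = (\<lambda>p. Du f p / (f p - ucoord p * Du f p))"

definition conf :: "(real \<times> real \<Rightarrow> real) \<Rightarrow> (real \<times> real \<times> real \<Rightarrow> real) \<Rightarrow> real \<times> real \<times> real \<Rightarrow> real" where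
  "conf \<sigma> f = (\<lambda>(a, b, c). exp (\<sigma> (a, b)) * f (a, b, c))"

definition sig1 :: "(real \<times> real \<Rightarrow> real) \<Rightarrow> real \<times> real \<Rightarrow> real" where
  "sig1 \<sigma> = (\<lambda>(a, b). deriv (\<lambda>t. \<sigma> (t, b)) a)"

definition sig2 :: "(real \<times> real \<Rightarrow> real) \<Rightarrow> real \<times> real \<Rightarrow> real" where
  "sig2 \<sigma> = (\<lambda>(a, b). deriv (\<lambda>t. \<sigma> (a, t)) b)"

end

theory Submission
  imports Defs
begin

(* Since fbar = e^sigma f, one has Qbar = Q, and a direct computation with
   Q' = f f'' / (f - u f')^2 gives the change of the spray coefficients
     fbar_1 = f_1 + sigma_1/2 (1 - Q^2/Q') + sigma_2/2 (u + Q/Q'),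
     fbar_2 = f_2 + sigma_1/2 (u + Q/Q') + sigma_2/2 (u^2 - 1/Q').
   Three u-derivatives kill the polynomial parts. With P = 1/Q', the third derivative of P
   enters fbar_1''' + Q fbar_2''' with total coefficient zero, so the result depends on
   Q and its first three derivatives alone. *)

section \<open>Finitely differentiable functions on open subsets of the line\<close>

definition n_times_differentiable_on :: "nat \<Rightarrow> real set \<Rightarrow> (real \<Rightarrow> real) \<Rightarrow> bool" where
  "n_times_differentiable_on n I g \<longleftrightarrow>
     (\<forall>k<n. \<forall>t\<in>I. (deriv ^^ k) g field_differentiable (at t))"

lemma n_times_differentiable_on_0 [simp]: "n_times_differentiable_on 0 I g"
  by (simp add: n_times_differentiable_on_def)

lemma n_times_differentiable_on_Suc:
  "n_times_differentiable_on (Suc n) I g \<longleftrightarrow>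
     (\<forall>t\<in>I. g field_differentiable (at t)) \<and> n_times_differentiable_on n I (deriv g)"
  by (auto simp: n_times_differentiable_on_def less_Suc_eq_0_disj funpow_Suc_right
           simp del: funpow.simps)

lemma n_times_differentiable_on_mono:
  "n_times_differentiable_on n I g \<Longrightarrow> m \<le> n \<Longrightarrow> n_times_differentiable_on m I g"
  by (simp add: n_times_differentiable_on_def)

lemma deriv_cong_open:
  "open I \<Longrightarrow> t \<in> I \<Longrightarrow> (\<And>s. s \<in> I \<Longrightarrow> g s = h s) \<Longrightarrow> deriv g t = deriv h t"
  by (rule deriv_cong_ev) (auto simp: eventually_nhds)

lemma deriv3_cong_open:
  assumes "open I" "t \<in> I" "\<And>s. s \<in> I \<Longrightarrow> g s = h s"
  shows "deriv (deriv (deriv g)) t = deriv (deriv (deriv h)) t"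
  using higher_deriv_cong_ev[of g h t t 3] assms
  by (auto simp: eventually_nhds eval_nat_numeral)

lemma n_times_differentiable_on_cong:
  assumes "open I" and "n_times_differentiable_on n I g" and "\<And>t. t \<in> I \<Longrightarrow> g t = h t"
  shows "n_times_differentiable_on n I h"
  unfolding n_times_differentiable_on_def
proof (intro allI impI ballI)
  fix k t assume "k < n" "t \<in> I"
  then obtain D where "((deriv ^^ k) g has_field_derivative D) (at t)"
    using assms(2) by (auto simp: n_times_differentiable_on_def field_differentiable_def)
  moreover have "(deriv ^^ k) g s = (deriv ^^ k) h s" if "s \<in> I" for s
    using assms that by (intro higher_deriv_cong_ev) (auto simp: eventually_nhds)
  ultimately show "(deriv ^^ k) h field_differentiable (at t)"
    unfolding field_differentiable_def
    using has_field_derivative_transform_within_open \<open>t \<in> I\<close> assms(1) by blast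
qed

lemma n_times_differentiable_on_const: "n_times_differentiable_on n I (\<lambda>t. c)"
  by (induction n arbitrary: c) (simp_all add: n_times_differentiable_on_Suc)

lemma n_times_differentiable_on_ident: "n_times_differentiable_on n I (\<lambda>t. t)"
  by (cases n) (simp_all add: n_times_differentiable_on_Suc n_times_differentiable_on_const)

context
  fixes I :: "real set"
  assumes I: "open I"
begin

lemma n_times_differentiable_on_add:
  "n_times_differentiable_on n I g \<Longrightarrow> n_times_differentiable_on n I h \<Longrightarrow>
     n_times_differentiable_on n I (\<lambda>t. g t + h t)"
proof (induction n arbitrary: g h)
  case (Suc n)
  have "n_times_differentiable_on n I (\<lambda>t. deriv g t + deriv h t)"
    using Suc by (simp add: n_times_differentiable_on_Suc)
  moreover have "deriv g t + deriv h t = deriv (\<lambda>t. g t + h t) t" if "t \<in> I" for t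
    using Suc.prems that by (simp add: n_times_differentiable_on_Suc)
  ultimately have "n_times_differentiable_on n I (deriv (\<lambda>t. g t + h t))"
    by (rule n_times_differentiable_on_cong[OF I])
  then show ?case
    using Suc.prems by (auto simp: n_times_differentiable_on_Suc intro: derivative_intros)
qed simp

lemma n_times_differentiable_on_mult:
  "n_times_differentiable_on n I g \<Longrightarrow> n_times_differentiable_on n I h \<Longrightarrow>
     n_times_differentiable_on n I (\<lambda>t. g t * h t)"
proof (induction n arbitrary: g h)
  case (Suc n)
  have "n_times_differentiable_on n I g" "n_times_differentiable_on n I h"
    using Suc.prems n_times_differentiable_on_mono le_SucI by blast+
  then have "n_times_differentiable_on n I (\<lambda>t. g t * deriv h t + deriv g t * h t)"
    using Suc by (intro n_times_differentiable_on_add) (simp_all add: n_times_differentiable_on_Suc)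
  moreover have "g t * deriv h t + deriv g t * h t = deriv (\<lambda>t. g t * h t) t" if "t \<in> I" for t
    using Suc.prems that by (simp add: n_times_differentiable_on_Suc)
  ultimately have "n_times_differentiable_on n I (deriv (\<lambda>t. g t * h t))"
    by (rule n_times_differentiable_on_cong[OF I])
  then show ?case
    using Suc.prems by (auto simp: n_times_differentiable_on_Suc intro: derivative_intros)
qed simp

lemma n_times_differentiable_on_inverse:
  "n_times_differentiable_on n I g \<Longrightarrow> (\<And>t. t \<in> I \<Longrightarrow> g t \<noteq> 0) \<Longrightarrow>
     n_times_differentiable_on n I (\<lambda>t. inverse (g t))"
proof (induction n arbitrary: g)
  case (Suc n)
  have "n_times_differentiable_on n I (\<lambda>t. inverse (g t))"
    using Suc n_times_differentiable_on_mono le_SucI by blast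
  then have "n_times_differentiable_on n I (\<lambda>t. - 1 * deriv g t * (inverse (g t) * inverse (g t)))"
    using Suc.prems
    by (intro n_times_differentiable_on_mult n_times_differentiable_on_const)
       (simp_all add: n_times_differentiable_on_Suc)
  moreover have "- 1 * deriv g t * (inverse (g t) * inverse (g t)) = deriv (\<lambda>t. inverse (g t)) t"
    if "t \<in> I" for t
    using Suc.prems that
    by (simp add: n_times_differentiable_on_Suc power2_eq_square divide_inverse)
  ultimately have "n_times_differentiable_on n I (deriv (\<lambda>t. inverse (g t)))"
    by (rule n_times_differentiable_on_cong[OF I])
  then show ?case
    using Suc.prems by (auto simp: n_times_differentiable_on_Suc intro: derivative_intros)
qed simp

lemma n_times_differentiable_on_diff:
  assumes "n_times_differentiable_on n I g" and "n_times_differentiable_on n I h"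
  shows "n_times_differentiable_on n I (\<lambda>t. g t - h t)"
proof -
  have "n_times_differentiable_on n I (\<lambda>t. g t + (- 1) * h t)"
    by (intro n_times_differentiable_on_add n_times_differentiable_on_mult
        n_times_differentiable_on_const assms)
  then show ?thesis by simp
qed

lemma n_times_differentiable_on_divide:
  "n_times_differentiable_on n I g \<Longrightarrow> n_times_differentiable_on n I h \<Longrightarrow>
     (\<And>t. t \<in> I \<Longrightarrow> h t \<noteq> 0) \<Longrightarrow> n_times_differentiable_on n I (\<lambda>t. g t / h t)"
  unfolding divide_inverse
  by (intro n_times_differentiable_on_mult n_times_differentiable_on_inverse)

lemmas n_times_differentiable_on_intros =
  n_times_differentiable_on_const n_times_differentiable_on_ident
  n_times_differentiable_on_add n_times_differentiable_on_diff
  n_times_differentiable_on_mult n_times_differentiable_on_divide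

lemma deriv3_add:
  assumes "n_times_differentiable_on 3 I g" "n_times_differentiable_on 3 I h" "t \<in> I"
  shows "deriv (deriv (deriv (\<lambda>s. g s + h s))) t
       = deriv (deriv (deriv g)) t + deriv (deriv (deriv h)) t"
proof -
  have d1: "deriv (\<lambda>s. g s + h s) s = deriv g s + deriv h s" if "s \<in> I" for s
    using assms that by (simp add: n_times_differentiable_on_Suc numeral_3_eq_3)
  have d2: "deriv (deriv (\<lambda>s. g s + h s)) s = deriv (deriv g) s + deriv (deriv h) s"
    if "s \<in> I" for s
    using assms that deriv_cong_open[OF I that d1]
    by (simp add: n_times_differentiable_on_Suc numeral_3_eq_3)
  show ?thesis
    using assms deriv_cong_open[OF I assms(3) d2]
    by (simp add: n_times_differentiable_on_Suc numeral_3_eq_3)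
qed

lemma deriv3_add_cong:
  assumes "n_times_differentiable_on 3 I h" "n_times_differentiable_on 3 I G" "t \<in> I"
    and "\<And>s. s \<in> I \<Longrightarrow> g s = h s + G s"
  shows "deriv (deriv (deriv g)) t = deriv (deriv (deriv h)) t + deriv (deriv (deriv G)) t"
  using deriv3_cong_open[OF I assms(3,4)] deriv3_add[OF assms(1-3)] by simp

lemma higher_deriv_mult:
  assumes "n_times_differentiable_on 3 I g" "n_times_differentiable_on 3 I h" "t \<in> I"
  shows "deriv (\<lambda>s. g s * h s) t = deriv g t * h t + g t * deriv h t"
    and "deriv (deriv (\<lambda>s. g s * h s)) t
           = deriv (deriv g) t * h t + 2 * deriv g t * deriv h t + g t * deriv (deriv h) t"
    and "deriv (deriv (deriv (\<lambda>s. g s * h s))) t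
           = deriv (deriv (deriv g)) t * h t + 3 * deriv (deriv g) t * deriv h t
             + 3 * deriv g t * deriv (deriv h) t + g t * deriv (deriv (deriv h)) t"
proof -
  have d1: "deriv (\<lambda>s. g s * h s) s = deriv g s * h s + g s * deriv h s" if "s \<in> I" for s
    using assms that by (simp add: n_times_differentiable_on_Suc numeral_3_eq_3)
  then show "deriv (\<lambda>s. g s * h s) t = deriv g t * h t + g t * deriv h t"
    using assms(3) .
  have d2: "deriv (deriv (\<lambda>s. g s * h s)) s
      = deriv (deriv g) s * h s + 2 * deriv g s * deriv h s + g s * deriv (deriv h) s"
    if "s \<in> I" for s
    using assms that deriv_cong_open[OF I that d1]
    by (simp add: n_times_differentiable_on_Suc numeral_3_eq_3 field_differentiable_mult)
  then show "deriv (deriv (\<lambda>s. g s * h s)) t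
      = deriv (deriv g) t * h t + 2 * deriv g t * deriv h t + g t * deriv (deriv h) t"
    using assms(3) .
  show "deriv (deriv (deriv (\<lambda>s. g s * h s))) t
      = deriv (deriv (deriv g)) t * h t + 3 * deriv (deriv g) t * deriv h t
        + 3 * deriv g t * deriv (deriv h) t + g t * deriv (deriv (deriv h)) t"
    using assms deriv_cong_open[OF I assms(3) d2]
    by (simp add: n_times_differentiable_on_Suc numeral_3_eq_3 field_differentiable_mult
        field_differentiable_add algebra_simps)
qed

lemma higher_deriv_reciprocal:
  assumes "n_times_differentiable_on 2 I g" "\<And>s. s \<in> I \<Longrightarrow> g s \<noteq> 0" "t \<in> I"
  shows "deriv (\<lambda>s. 1 / g s) t = - deriv g t / g t ^ 2"
    and "deriv (deriv (\<lambda>s. 1 / g s)) t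
           = - deriv (deriv g) t / g t ^ 2 + 2 * deriv g t ^ 2 / g t ^ 3"
proof -
  have d1: "deriv (\<lambda>s. 1 / g s) s = - deriv g s / g s ^ 2" if "s \<in> I" for s
    using assms that by (simp add: n_times_differentiable_on_Suc numeral_2_eq_2)
  then show "deriv (\<lambda>s. 1 / g s) t = - deriv g t / g t ^ 2"
    using assms(3) .
  have "deriv (deriv (\<lambda>s. 1 / g s)) t = deriv (\<lambda>s. - deriv g s / g s ^ 2) t"
    by (rule deriv_cong_open[OF I assms(3) d1])
  also have "\<dots> = - deriv (deriv g) t / g t ^ 2 + 2 * deriv g t ^ 2 / g t ^ 3"
  proof (rule DERIV_imp_deriv)
    have "(g has_real_derivative deriv g t) (at t)"
      and "(deriv g has_real_derivative deriv (deriv g) t) (at t)"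
      using assms by (auto simp: n_times_differentiable_on_Suc numeral_2_eq_2
          DERIV_deriv_iff_field_differentiable)
    then show "((\<lambda>s. - deriv g s / g s ^ 2) has_real_derivative
        - deriv (deriv g) t / g t ^ 2 + 2 * deriv g t ^ 2 / g t ^ 3) (at t)"
      using assms(2,3) by (auto intro!: derivative_eq_intros simp: field_simps power2_eq_square
          power3_eq_cube)
  qed
  finally show "deriv (deriv (\<lambda>s. 1 / g s)) t
      = - deriv (deriv g) t / g t ^ 2 + 2 * deriv g t ^ 2 / g t ^ 3" .
qed

lemma deriv3_quadratic_add_lincomb:
  assumes g: "n_times_differentiable_on 3 I g" and h: "n_times_differentiable_on 3 I h"
    and t: "t \<in> I"
  shows "deriv (deriv (deriv (\<lambda>s. a + b * s + c * s ^ 2 + (d * g s + e * h s)))) t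
       = d * deriv (deriv (deriv g)) t + e * deriv (deriv (deriv h)) t"
proof -
  have "deriv (\<lambda>s. a + b * s + c * s ^ 2) = (\<lambda>s. b + 2 * c * s)"
    by (intro ext DERIV_imp_deriv) (auto intro!: derivative_eq_intros)
  moreover have "deriv (\<lambda>s. b + 2 * c * s) = (\<lambda>s. 2 * c)"
    by (intro ext DERIV_imp_deriv) (auto intro!: derivative_eq_intros)
  ultimately have quadratic: "deriv (deriv (deriv (\<lambda>s. a + b * s + c * s ^ 2))) t = 0"
    by simp
  have "n_times_differentiable_on 3 I (\<lambda>s. a + b * s + c * s ^ 2)"
    unfolding power2_eq_square by (intro n_times_differentiable_on_intros)
  moreover have dg: "n_times_differentiable_on 3 I (\<lambda>s. d * g s)"
    and eh: "n_times_differentiable_on 3 I (\<lambda>s. e * h s)"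
    by (intro n_times_differentiable_on_intros g h)+
  moreover have "n_times_differentiable_on 3 I (\<lambda>s. d * g s + e * h s)"
    by (intro n_times_differentiable_on_intros dg eh)
  ultimately show ?thesis
    using higher_deriv_mult(3)[OF n_times_differentiable_on_const[of 3 I d] g t]
      higher_deriv_mult(3)[OF n_times_differentiable_on_const[of 3 I e] h t]
    by (simp add: deriv3_add[OF _ _ t] quadratic)
qed

lemma deriv3_conformal_correction:
  assumes q: "n_times_differentiable_on 4 I q" and q': "\<And>t. t \<in> I \<Longrightarrow> deriv q t \<noteq> 0"
    and u: "u \<in> I"
  shows "deriv (deriv (deriv
           (\<lambda>t. s1 / 2 * (1 - q t ^ 2 / deriv q t) + s2 / 2 * (t + q t / deriv q t)))) u
       + q u * deriv (deriv (deriv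
           (\<lambda>t. s1 / 2 * (t + q t / deriv q t) + s2 / 2 * (t ^ 2 - 1 / deriv q t)))) u
     = (2 * s1 * q u * deriv q u * deriv (deriv (deriv q)) u
        - 3 * s1 * deriv (deriv q) u ^ 2 * q u
        - 2 * s2 * deriv q u * deriv (deriv (deriv q)) u
        + 3 * s2 * deriv (deriv q) u ^ 2) / (2 * deriv q u ^ 2)"
proof -
  define P where "P = (\<lambda>t. 1 / deriv q t)"
  have q3: "n_times_differentiable_on 3 I q"
    using q n_times_differentiable_on_mono by simp
  have dq3: "n_times_differentiable_on 3 I (deriv q)"
    using q by (simp add: numeral_eq_Suc n_times_differentiable_on_Suc)
  have P3: "n_times_differentiable_on 3 I P"
    unfolding P_def by (intro n_times_differentiable_on_intros dq3 q')
  have qq3: "n_times_differentiable_on 3 I (\<lambda>t. q t * q t)"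
    by (intro n_times_differentiable_on_mult q3)
  have qP3: "n_times_differentiable_on 3 I (\<lambda>t. q t * P t)"
    and qqP3: "n_times_differentiable_on 3 I (\<lambda>t. q t * q t * P t)"
    by (intro n_times_differentiable_on_mult q3 P3)+
  have G1: "(\<lambda>t. s1 / 2 * (1 - q t ^ 2 / deriv q t) + s2 / 2 * (t + q t / deriv q t))
      = (\<lambda>t. s1 / 2 + s2 / 2 * t + 0 * t ^ 2 + (- s1 / 2 * (q t * q t * P t) + s2 / 2 * (q t * P t)))"
    by (simp add: fun_eq_iff P_def power2_eq_square algebra_simps)
  have G2: "(\<lambda>t. s1 / 2 * (t + q t / deriv q t) + s2 / 2 * (t ^ 2 - 1 / deriv q t))
      = (\<lambda>t. 0 + s1 / 2 * t + s2 / 2 * t ^ 2 + (s1 / 2 * (q t * P t) + - s2 / 2 * P t))"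
    by (simp add: fun_eq_iff P_def power2_eq_square algebra_simps)
  have P_derivs: "P u = 1 / deriv q u"
    "deriv P u = - deriv (deriv q) u / deriv q u ^ 2"
    "deriv (deriv P) u
       = - deriv (deriv (deriv q)) u / deriv q u ^ 2 + 2 * deriv (deriv q) u ^ 2 / deriv q u ^ 3"
    unfolding P_def using higher_deriv_reciprocal[OF n_times_differentiable_on_mono[OF dq3] q' u]
    by simp_all
  show ?thesis
    unfolding G1 G2 deriv3_quadratic_add_lincomb[OF qqP3 qP3 u] deriv3_quadratic_add_lincomb[OF qP3 P3 u]
      higher_deriv_mult(3)[OF qq3 P3 u] higher_deriv_mult(3)[OF q3 P3 u] higher_deriv_mult[OF q3 q3 u]
      P_derivs
    using q'[OF u] by (simp add: field_simps power2_eq_square power3_eq_cube)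
qed

end

section \<open>Partial derivatives under the conformal change\<close>

lemma open_slices:
  assumes "open U"
  shows "open {t. (t, b, c) \<in> U}" "open {t. (a, t, c) \<in> U}" "open {t. (a, b, t) \<in> U}"
proof -
  have "open ((\<lambda>t. (t, b, c)) -` U)" "open ((\<lambda>t. (a, t, c)) -` U)" "open ((\<lambda>t. (a, b, t)) -` U)"
    by (intro open_vimage[OF assms] continuous_intros)+
  then show "open {t. (t, b, c) \<in> U}" "open {t. (a, t, c) \<in> U}" "open {t. (a, b, t) \<in> U}"
    by (simp_all add: vimage_def)
qed

lemma smooth3_D:
  assumes "smooth3 U g"
  shows "smooth3 U (D1 g)" "smooth3 U (D2 g)" "smooth3 U (Du g)"
    and "(a, b, c) \<in> U \<Longrightarrow> (\<lambda>t. g (t, b, c)) differentiable (at a)"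
    and "(a, b, c) \<in> U \<Longrightarrow> (\<lambda>t. g (a, t, c)) differentiable (at b)"
    and "(a, b, c) \<in> U \<Longrightarrow> (\<lambda>t. g (a, b, t)) differentiable (at c)"
  using assms by (auto elim: smooth3.cases)

lemma Du_eq_deriv_slice: "Du g (a, b, c) = deriv (\<lambda>t. g (a, b, t)) c"
  by (simp add: Du_def)

lemma smooth3_imp_n_times_differentiable_on_slice:
  "smooth3 U g \<Longrightarrow> n_times_differentiable_on n {t. (a, b, t) \<in> U} (\<lambda>t. g (a, b, t))"
proof (induction n arbitrary: g)
  case (Suc n)
  have "deriv (\<lambda>t. g (a, b, t)) = (\<lambda>t. Du g (a, b, t))"
    by (simp add: Du_eq_deriv_slice)
  then show ?case
    using Suc smooth3_D[OF Suc.prems]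
    by (fastforce simp: n_times_differentiable_on_Suc field_differentiable_def
        DERIV_deriv_iff_real_differentiable[symmetric])
qed simp

lemma Du_cong:
  "open U \<Longrightarrow> (a, b, c) \<in> U \<Longrightarrow> (\<And>p. p \<in> U \<Longrightarrow> g p = h p) \<Longrightarrow> Du g (a, b, c) = Du h (a, b, c)"
  unfolding Du_def by (simp, rule deriv_cong_open[OF open_slices(3)]) auto

lemma D1_cong:
  "open U \<Longrightarrow> (a, b, c) \<in> U \<Longrightarrow> (\<And>p. p \<in> U \<Longrightarrow> g p = h p) \<Longrightarrow> D1 g (a, b, c) = D1 h (a, b, c)"
  unfolding D1_def by (simp, rule deriv_cong_open[OF open_slices(1)]) auto

lemma D2_cong:
  "open U \<Longrightarrow> (a, b, c) \<in> U \<Longrightarrow> (\<And>p. p \<in> U \<Longrightarrow> g p = h p) \<Longrightarrow> D2 g (a, b, c) = D2 h (a, b, c)"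
  unfolding D2_def by (simp, rule deriv_cong_open[OF open_slices(2)]) auto

lemma Du_conf:
  "(\<lambda>t. g (a, b, t)) differentiable (at c) \<Longrightarrow>
     Du (conf \<sigma> g) (a, b, c) = exp (\<sigma> (a, b)) * Du g (a, b, c)"
  unfolding Du_def conf_def
  by (simp, rule DERIV_imp_deriv)
     (auto intro!: derivative_eq_intros simp: DERIV_deriv_iff_real_differentiable[symmetric])

lemma D1_conf:
  "(\<lambda>t. g (t, b, c)) differentiable (at a) \<Longrightarrow> (\<lambda>t. \<sigma> (t, b)) differentiable (at a) \<Longrightarrow>
     D1 (conf \<sigma> g) (a, b, c) = exp (\<sigma> (a, b)) * (sig1 \<sigma> (a, b) * g (a, b, c) + D1 g (a, b, c))"
  unfolding D1_def conf_def sig1_def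
  by (simp, rule DERIV_imp_deriv)
     (auto intro!: derivative_eq_intros
       simp: DERIV_deriv_iff_real_differentiable[symmetric] algebra_simps)

lemma D2_conf:
  "(\<lambda>t. g (a, t, c)) differentiable (at b) \<Longrightarrow> (\<lambda>t. \<sigma> (a, t)) differentiable (at b) \<Longrightarrow>
     D2 (conf \<sigma> g) (a, b, c) = exp (\<sigma> (a, b)) * (sig2 \<sigma> (a, b) * g (a, b, c) + D2 g (a, b, c))"
  unfolding D2_def conf_def sig2_def
  by (simp, rule DERIV_imp_deriv)
     (auto intro!: derivative_eq_intros
       simp: DERIV_deriv_iff_real_differentiable[symmetric] algebra_simps)

lemma partials_conf:
  assumes U: "open U" and f: "smooth3 U f" and abc: "(a, b, c) \<in> U"
    and \<sigma>1: "(\<lambda>t. \<sigma> (t, b)) differentiable (at a)" and \<sigma>2: "(\<lambda>t. \<sigma> (a, t)) differentiable (at b)"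
  defines "e \<equiv> exp (\<sigma> (a, b))"
  shows "Du (conf \<sigma> f) (a, b, c) = e * Du f (a, b, c)"
    and "Du (Du (conf \<sigma> f)) (a, b, c) = e * Du (Du f) (a, b, c)"
    and "D1 (conf \<sigma> f) (a, b, c) = e * (sig1 \<sigma> (a, b) * f (a, b, c) + D1 f (a, b, c))"
    and "D2 (conf \<sigma> f) (a, b, c) = e * (sig2 \<sigma> (a, b) * f (a, b, c) + D2 f (a, b, c))"
    and "D1 (Du (conf \<sigma> f)) (a, b, c) = e * (sig1 \<sigma> (a, b) * Du f (a, b, c) + D1 (Du f) (a, b, c))"
    and "D2 (Du (conf \<sigma> f)) (a, b, c) = e * (sig2 \<sigma> (a, b) * Du f (a, b, c) + D2 (Du f) (a, b, c))"
proof -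
  have Du_conf_on: "Du (conf \<sigma> f) p = conf \<sigma> (Du f) p" if "p \<in> U" for p
    using that Du_conf[OF smooth3_D(6)[OF f]] by (cases p) (auto simp: conf_def)
  show "Du (conf \<sigma> f) (a, b, c) = e * Du f (a, b, c)"
    using Du_conf_on[OF abc] by (simp add: conf_def e_def)
  have "Du (Du (conf \<sigma> f)) (a, b, c) = Du (conf \<sigma> (Du f)) (a, b, c)"
    by (rule Du_cong[OF U abc Du_conf_on])
  then show "Du (Du (conf \<sigma> f)) (a, b, c) = e * Du (Du f) (a, b, c)"
    unfolding e_def using Du_conf[OF smooth3_D(6)[OF smooth3_D(3)[OF f] abc]] by simp
  show "D1 (conf \<sigma> f) (a, b, c) = e * (sig1 \<sigma> (a, b) * f (a, b, c) + D1 f (a, b, c))"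
    unfolding e_def by (rule D1_conf[OF smooth3_D(4)[OF f abc] \<sigma>1])
  show "D2 (conf \<sigma> f) (a, b, c) = e * (sig2 \<sigma> (a, b) * f (a, b, c) + D2 f (a, b, c))"
    unfolding e_def by (rule D2_conf[OF smooth3_D(5)[OF f abc] \<sigma>2])
  have "D1 (Du (conf \<sigma> f)) (a, b, c) = D1 (conf \<sigma> (Du f)) (a, b, c)"
    by (rule D1_cong[OF U abc Du_conf_on])
  then show "D1 (Du (conf \<sigma> f)) (a, b, c) = e * (sig1 \<sigma> (a, b) * Du f (a, b, c) + D1 (Du f) (a, b, c))"
    unfolding e_def using D1_conf[OF smooth3_D(4)[OF smooth3_D(3)[OF f] abc] \<sigma>1] by simp
  have "D2 (Du (conf \<sigma> f)) (a, b, c) = D2 (conf \<sigma> (Du f)) (a, b, c)"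
    by (rule D2_cong[OF U abc Du_conf_on])
  then show "D2 (Du (conf \<sigma> f)) (a, b, c) = e * (sig2 \<sigma> (a, b) * Du f (a, b, c) + D2 (Du f) (a, b, c))"
    unfolding e_def using D2_conf[OF smooth3_D(5)[OF smooth3_D(3)[OF f] abc] \<sigma>2] by simp
qed

lemma Du_Qf:
  assumes "(\<lambda>t. f (a, b, t)) differentiable (at c)" "(\<lambda>t. Du f (a, b, t)) differentiable (at c)"
    and "f (a, b, c) - c * Du f (a, b, c) \<noteq> 0"
  shows "Du (Qf f) (a, b, c) = f (a, b, c) * Du (Du f) (a, b, c) / (f (a, b, c) - c * Du f (a, b, c)) ^ 2"
proof -
  have "((\<lambda>t. f (a, b, t)) has_real_derivative Du f (a, b, c)) (at c)"
    and "((\<lambda>t. Du f (a, b, t)) has_real_derivative Du (Du f) (a, b, c)) (at c)"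
    using assms(1,2) by (simp_all add: Du_eq_deriv_slice DERIV_deriv_iff_real_differentiable)
  then have "((\<lambda>t. Du f (a, b, t) / (f (a, b, t) - t * Du f (a, b, t))) has_real_derivative
      f (a, b, c) * Du (Du f) (a, b, c) / (f (a, b, c) - c * Du f (a, b, c)) ^ 2) (at c)"
    using assms(3) by (auto intro!: derivative_eq_intros simp: field_simps power2_eq_square)
  then show ?thesis
    unfolding Du_eq_deriv_slice[of "Qf f"] by (simp add: Qf_def ucoord_def DERIV_imp_deriv)
qed

lemma Qf_over_Du_Qf:
  assumes "(\<lambda>t. f (a, b, t)) differentiable (at c)" "(\<lambda>t. Du f (a, b, t)) differentiable (at c)"
    and "f (a, b, c) \<noteq> 0" "Du (Du f) (a, b, c) \<noteq> 0" "f (a, b, c) - c * Du f (a, b, c) \<noteq> 0"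
  shows "Qf f (a, b, c) ^ 2 / Du (Qf f) (a, b, c) = Du f (a, b, c) ^ 2 / (f (a, b, c) * Du (Du f) (a, b, c))"
    and "Qf f (a, b, c) / Du (Qf f) (a, b, c)
           = Du f (a, b, c) * (f (a, b, c) - c * Du f (a, b, c)) / (f (a, b, c) * Du (Du f) (a, b, c))"
    and "1 / Du (Qf f) (a, b, c) = (f (a, b, c) - c * Du f (a, b, c)) ^ 2 / (f (a, b, c) * Du (Du f) (a, b, c))"
  using assms(3-5) unfolding Du_Qf[OF assms(1,2,5)]
  by (simp_all add: Qf_def ucoord_def field_simps) (simp add: power2_eq_square algebra_simps)

lemma f1_conf:
  assumes U: "open U" and f: "smooth3 U f" and abc: "(a, b, c) \<in> U"
    and \<sigma>1: "(\<lambda>t. \<sigma> (t, b)) differentiable (at a)" and \<sigma>2: "(\<lambda>t. \<sigma> (a, t)) differentiable (at b)"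
    and nz: "f (a, b, c) \<noteq> 0" "Du (Du f) (a, b, c) \<noteq> 0" "f (a, b, c) - c * Du f (a, b, c) \<noteq> 0"
  shows "f1 (conf \<sigma> f) (a, b, c) = f1 f (a, b, c)
    + sig1 \<sigma> (a, b) / 2 * (1 - Qf f (a, b, c) ^ 2 / Du (Qf f) (a, b, c))
    + sig2 \<sigma> (a, b) / 2 * (c + Qf f (a, b, c) / Du (Qf f) (a, b, c))"
  unfolding f1_def Let_def ucoord_def snd_conv partials_conf[OF U f abc \<sigma>1 \<sigma>2]
    Qf_over_Du_Qf[OF smooth3_D(6)[OF f abc] smooth3_D(6)[OF smooth3_D(3)[OF f] abc] nz]
  using nz by (simp add: conf_def field_simps power2_eq_square)

lemma f2_conf:
  assumes U: "open U" and f: "smooth3 U f" and abc: "(a, b, c) \<in> U"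
    and \<sigma>1: "(\<lambda>t. \<sigma> (t, b)) differentiable (at a)" and \<sigma>2: "(\<lambda>t. \<sigma> (a, t)) differentiable (at b)"
    and nz: "f (a, b, c) \<noteq> 0" "Du (Du f) (a, b, c) \<noteq> 0" "f (a, b, c) - c * Du f (a, b, c) \<noteq> 0"
  shows "f2 (conf \<sigma> f) (a, b, c) = f2 f (a, b, c)
    + sig1 \<sigma> (a, b) / 2 * (c + Qf f (a, b, c) / Du (Qf f) (a, b, c))
    + sig2 \<sigma> (a, b) / 2 * (c ^ 2 - 1 / Du (Qf f) (a, b, c))"
  unfolding f2_def Let_def ucoord_def snd_conv partials_conf[OF U f abc \<sigma>1 \<sigma>2]
    Qf_over_Du_Qf[OF smooth3_D(6)[OF f abc] smooth3_D(6)[OF smooth3_D(3)[OF f] abc] nz]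
  using nz by (simp add: conf_def field_simps power2_eq_square)

lemma Qf_conf:
  "(\<lambda>t. f (a, b, t)) differentiable (at c) \<Longrightarrow> Qf (conf \<sigma> f) (a, b, c) = Qf f (a, b, c)"
  unfolding Qf_def ucoord_def snd_conv
  by (simp add: Du_conf) (simp add: conf_def mult.left_commute[of c] right_diff_distrib[symmetric])

section \<open>Third u-derivatives along a slice\<close>

context
  fixes U :: "(real \<times> real \<times> real) set" and f :: "real \<times> real \<times> real \<Rightarrow> real"
  assumes U: "open U" and f: "smooth3 U f"
    and f_nz: "\<forall>p\<in>U. f p \<noteq> 0" and f_conv: "\<forall>p\<in>U. Du (Du f) p \<noteq> 0"
    and f_nondeg: "\<forall>p\<in>U. f p - ucoord p * Du f p \<noteq> 0"
begin

lemma n_times_differentiable_on_slice_Qf: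
  "n_times_differentiable_on n {t. (a, b, t) \<in> U} (\<lambda>t. Qf f (a, b, t))"
  unfolding Qf_def ucoord_def snd_conv
  using f_nondeg f smooth3_D(3)[OF f] open_slices(3)[OF U]
  by (intro n_times_differentiable_on_intros smooth3_imp_n_times_differentiable_on_slice)
     (auto simp: ucoord_def)

lemma deriv_slice_Qf_nonzero: "(a, b, t) \<in> U \<Longrightarrow> deriv (\<lambda>s. Qf f (a, b, s)) t \<noteq> 0"
  using f_nz f_conv f_nondeg
  by (auto simp: Du_eq_deriv_slice[symmetric] Du_Qf smooth3_D(6)[OF f]
      smooth3_D(6)[OF smooth3_D(3)[OF f]] ucoord_def)

lemma n_times_differentiable_on_slice_f1_f2:
  "n_times_differentiable_on n {t. (a, b, t) \<in> U} (\<lambda>t. f1 f (a, b, t))"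
  "n_times_differentiable_on n {t. (a, b, t) \<in> U} (\<lambda>t. f2 f (a, b, t))"
  unfolding f1_def f2_def Let_def ucoord_def snd_conv
  using f_nz f_conv open_slices(3)[OF U]
  by (intro n_times_differentiable_on_intros smooth3_imp_n_times_differentiable_on_slice
      f smooth3_D(1-3)[OF f] smooth3_D(1-3)[OF smooth3_D(3)[OF f]]; auto)+

lemma deriv3_slice_conf:
  assumes abc: "(a, b, c) \<in> U"
    and \<sigma>1: "(\<lambda>t. \<sigma> (t, b)) differentiable (at a)" and \<sigma>2: "(\<lambda>t. \<sigma> (a, t)) differentiable (at b)"
  defines "q \<equiv> \<lambda>t. Qf f (a, b, t)" and "s1 \<equiv> sig1 \<sigma> (a, b)" and "s2 \<equiv> sig2 \<sigma> (a, b)"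
  defines "G1 \<equiv> \<lambda>t. s1 / 2 * (1 - q t ^ 2 / deriv q t) + s2 / 2 * (t + q t / deriv q t)"
    and "G2 \<equiv> \<lambda>t. s1 / 2 * (t + q t / deriv q t) + s2 / 2 * (t ^ 2 - 1 / deriv q t)"
  shows "deriv (deriv (deriv (\<lambda>t. f1 (conf \<sigma> f) (a, b, t)))) c
           = deriv (deriv (deriv (\<lambda>t. f1 f (a, b, t)))) c + deriv (deriv (deriv G1)) c"
    and "deriv (deriv (deriv (\<lambda>t. f2 (conf \<sigma> f) (a, b, t)))) c
           = deriv (deriv (deriv (\<lambda>t. f2 f (a, b, t)))) c + deriv (deriv (deriv G2)) c"
proof -
  define L where "L = {t. (a, b, t) \<in> U}"
  have L: "open L" "c \<in> L"
    using open_slices(3)[OF U] abc by (simp_all add: L_def)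
  have q3: "n_times_differentiable_on 3 L q" and dq3: "n_times_differentiable_on 3 L (deriv q)"
    using n_times_differentiable_on_slice_Qf[of 4 a b]
    by (auto simp: q_def L_def numeral_eq_Suc n_times_differentiable_on_Suc)
  have q': "deriv q t \<noteq> 0" if "t \<in> L" for t
    using deriv_slice_Qf_nonzero that by (simp add: q_def L_def)
  have "f1 (conf \<sigma> f) (a, b, t) = f1 f (a, b, t) + G1 t"
    and "f2 (conf \<sigma> f) (a, b, t) = f2 f (a, b, t) + G2 t" if "t \<in> L" for t
  proof -
    have t: "(a, b, t) \<in> U" using that by (simp add: L_def)
    note nz = bspec[OF f_nz t] bspec[OF f_conv t] bspec[OF f_nondeg t, unfolded ucoord_def snd_conv]
    show "f1 (conf \<sigma> f) (a, b, t) = f1 f (a, b, t) + G1 t"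
      using f1_conf[OF U f t \<sigma>1 \<sigma>2 nz] by (simp add: G1_def q_def s1_def s2_def Du_eq_deriv_slice)
    show "f2 (conf \<sigma> f) (a, b, t) = f2 f (a, b, t) + G2 t"
      using f2_conf[OF U f t \<sigma>1 \<sigma>2 nz] by (simp add: G2_def q_def s1_def s2_def Du_eq_deriv_slice)
  qed
  moreover have "n_times_differentiable_on 3 L G1" "n_times_differentiable_on 3 L G2"
    unfolding G1_def G2_def power2_eq_square
    by (auto intro!: n_times_differentiable_on_intros L(1) q3 dq3 q')
  moreover have "n_times_differentiable_on 3 L (\<lambda>t. f1 f (a, b, t))"
    "n_times_differentiable_on 3 L (\<lambda>t. f2 f (a, b, t))"
    unfolding L_def by (rule n_times_differentiable_on_slice_f1_f2)+
  ultimately show "deriv (deriv (deriv (\<lambda>t. f1 (conf \<sigma> f) (a, b, t)))) c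
           = deriv (deriv (deriv (\<lambda>t. f1 f (a, b, t)))) c + deriv (deriv (deriv G1)) c"
    and "deriv (deriv (deriv (\<lambda>t. f2 (conf \<sigma> f) (a, b, t)))) c
           = deriv (deriv (deriv (\<lambda>t. f2 f (a, b, t)))) c + deriv (deriv (deriv G2)) c"
    by (auto intro!: deriv3_add_cong[OF L(1) _ _ L(2)])
qed

end

theorem proposition4p5:
  fixes f :: "real \<times> real \<times> real \<Rightarrow> real"
    and \<sigma> :: "real \<times> real \<Rightarrow> real"
    and U :: "(real \<times> real \<times> real) set"
    and x1 x2 u :: real
  assumes U_open: "open U"
    and f_smooth: "smooth3 U f"
    and sigma_smooth: "smooth3 U (\<lambda>(a, b, c). \<sigma> (a, b))"
    and f_pos: "\<forall>p\<in>U. f p > 0"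
    and f_conv: "\<forall>p\<in>U. Du (Du f) p \<noteq> 0"
    and f_nondeg: "\<forall>p\<in>U. f p - ucoord p * Du f p \<noteq> 0"
    and pt: "(x1, x2, u) \<in> U"
  shows
   "(let p = (x1, x2, u); fb = conf \<sigma> f; Q = Qf f p; Q1 = Du (Qf f) p;
         Q2 = Du (Du (Qf f)) p; Q3 = Du (Du (Du (Qf f))) p;
         s1 = sig1 \<sigma> (x1, x2); s2 = sig2 \<sigma> (x1, x2) in
     Du (Du (Du (f1 fb))) p + Qf fb p * Du (Du (Du (f2 fb))) p
     = Du (Du (Du (f1 f))) p + Q * Du (Du (Du (f2 f))) p
       + (2 * s1 * Q * Q1 * Q3 - 3 * s1 * Q2^2 * Q - 2 * s2 * Q1 * Q3 + 3 * s2 * Q2^2)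
         / (2 * Q1^2))"
proof -
  have f_nz: "\<forall>p\<in>U. f p \<noteq> 0"
    using f_pos by force
  have \<sigma>: "(\<lambda>t. \<sigma> (t, x2)) differentiable (at x1)" "(\<lambda>t. \<sigma> (x1, t)) differentiable (at x2)"
    using smooth3_D(4,5)[OF sigma_smooth pt] by simp_all
  note slice_facts = U_open f_smooth f_nz f_conv f_nondeg
  have u: "u \<in> {t. (x1, x2, t) \<in> U}"
    using pt by simp
  have "Qf (conf \<sigma> f) (x1, x2, u) = Qf f (x1, x2, u)"
    by (rule Qf_conf[OF smooth3_D(6)[OF f_smooth pt]])
  moreover note deriv3_conformal_correction[OF open_slices(3)[OF U_open]
      n_times_differentiable_on_slice_Qf[OF slice_facts] _ u,
      of "sig1 \<sigma> (x1, x2)" "sig2 \<sigma> (x1, x2)"]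
  ultimately show ?thesis
    unfolding Let_def Du_eq_deriv_slice deriv3_slice_conf[OF slice_facts pt \<sigma>]
    using deriv_slice_Qf_nonzero[OF slice_facts] by (simp add: distrib_left)
qed

end
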